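(* Let $\mathcal{A}$ be a finite or countable alphabet, $\mathcal{M}$ a countable set of probability measures on $\mathcal{A}^\infty$, $w:\mathcal{M}\to(0,1]$ a prior with $\sum_{\nu\in\mathcal{M}} w_\nu = 1$, $\xi$ the Bayes mixture, and $\mu\in\mathcal{M}$. For all $\delta\in(0,1)$, with $\mu$-probability at least $1-\delta$, $$D_\infty \le e\cdot \ln\frac{6}{\delta}\cdot\left(\ln\frac{2}{\delta}+\ln\frac{1}{w_\mu}\right).$$
   Context: $\mathcal{A}^\infty$ is the set of infinite sequences over $\mathcal{A}$, equipped with the $\sigma$-algebra generated by the cylinder sets $\Gamma_x=\{x\omega:\omega\in\mathcal{A}^\infty\}$, $x$ a finite string. For a probability measure $\rho$ write $\rho(x):=\rho(\Gamma_x)$ and $\rho(y|x):=\rho(xy)/\rho(x)$. The Bayes mixture is $\xi(A):=\sum_{\nu\in\mathcal{M}} w_\nu\nu(A)$. Logarithms are natural. For a finite string $x$, the KL divergence between predictive distributions is $d_x(\mu,\xi):=\sum_{a\in\mathcal{A}}\mu(a|x)\ln\frac{\mu(a|x)}{\xi(a|x)}$. For $\omega\in\mathcal{A}^\infty$ let $\omega_{<t}=\omega_1\cdots\omega_{t-1}$, $d_t(\omega):=d_{\omega_{<t}}(\mu,\xi)$ and $D_\infty:=\sum_{t=1}^\infty d_t$. *)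

theory Defs
  imports "HOL-Probability.Probability"
begin

text \<open>Infinite sequences over the alphabet 'a are streams, with the sigma-algebra
  of the stream space over the discrete alphabet (generated by cylinders).\<close>

abbreviation seq_space :: "'a stream measure" where
  "seq_space \<equiv> stream_space (count_space UNIV)"

definition cyl :: "'a list \<Rightarrow> 'a stream set" where
  "cyl x = {\<omega>. stake (length x) \<omega> = x}"

definition mcyl :: "'a stream measure \<Rightarrow> 'a list \<Rightarrow> real" where
  "mcyl \<rho> x = measure \<rho> (cyl x)"

definition mix :: "'a stream measure set \<Rightarrow> ('a stream measure \<Rightarrow> real) \<Rightarrow> 'a list \<Rightarrow> real" where
  "mix M w x = (\<Sum>\<^sub>\<infinity>\<nu>\<in>M. w \<nu> * mcyl \<nu> x)"

definition dKL :: "('a list \<Rightarrow> real) \<Rightarrow> ('a list \<Rightarrow> real) \<Rightarrow> 'a list \<Rightarrow> real" where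
  "dKL m xi x = (\<Sum>\<^sub>\<infinity>a\<in>UNIV.
      (m (x @ [a]) / m x) * ln ((m (x @ [a]) / m x) / (xi (x @ [a]) / xi x)))"

definition Dinf :: "('a list \<Rightarrow> real) \<Rightarrow> ('a list \<Rightarrow> real) \<Rightarrow> 'a stream \<Rightarrow> ennreal" where
  "Dinf m xi \<omega> = (\<Sum>t. ennreal (dKL m xi (stake t \<omega>)))"

end

theory Submission
  imports Defs
begin

text \<open>The log-likelihood ratio \<open>V(x) = ln (\<xi>(x) / (w\<^sub>\<mu> \<mu>(x)))\<close> is nonnegative and drops in
  \<open>\<mu>\<close>-expectation by exactly \<open>d\<^sub>x\<close> per step, so \<open>exp (\<theta> A) (V + c)\<close>, with \<open>A\<close> the partial sum
  of the \<open>d\<^sub>t\<close>, is a nonnegative supermartingale as long as \<open>V + c \<le> 1/\<theta>\<close>. That bound holds while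
  \<open>\<xi> \<le> T \<mu>\<close> on all prefixes, and leaving this region is detected by the martingale \<open>\<xi>/(T \<mu>)\<close>.
  Normalised so that it is \<open>\<ge> 1\<close> once \<open>A > B\<close>, the sum of the two, stopped on leaving the region,
  is a supermartingale; Markov's inequality at every time, with \<open>T = 2/\<delta>\<close>,
  \<open>c = ln T + ln (1/w\<^sub>\<mu>)\<close>, \<open>\<theta> = 1/(2c)\<close> and \<open>B = e ln (6/\<delta>) c\<close>, bounds the probability that
  \<open>A\<close> ever exceeds \<open>B\<close> by \<open>\<delta>\<close>.\<close>

lemma has_sum_iff_nn_integral_count_space:
  fixes f :: "'b \<Rightarrow> real"
  assumes nonneg: "\<And>x. x \<in> A \<Longrightarrow> 0 \<le> f x" and "0 \<le> s"
  shows "(f has_sum s) A \<longleftrightarrow> (\<integral>\<^sup>+x. ennreal (f x) \<partial>count_space A) = ennreal s"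
proof
  assume sum: "(f has_sum s) A"
  then have abs: "Infinite_Set_Sum.abs_summable_on f A"
    using abs_summable_equivalent summable_on_iff_abs_summable_on_real has_sum_imp_summable by blast
  have "infsetsum f A = s"
    using infsetsum_infsum[OF abs] infsumI[OF sum] by simp
  then show "(\<integral>\<^sup>+x. ennreal (f x) \<partial>count_space A) = ennreal s"
    using nn_integral_conv_infsetsum[OF abs nonneg] by simp
next
  assume int: "(\<integral>\<^sup>+x. ennreal (f x) \<partial>count_space A) = ennreal s"
  have "integrable (count_space A) f"
    by (rule integrableI_nonneg) (use nonneg int in \<open>auto simp: AE_count_space\<close>)
  then have abs: "Infinite_Set_Sum.abs_summable_on f A"
    by (simp add: Infinite_Set_Sum.abs_summable_on_def)
  then have "f summable_on A"
    using abs_summable_equivalent abs_summable_summable by blast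
  moreover have "ennreal (infsum f A) = ennreal s"
    using nn_integral_conv_infsetsum[OF abs nonneg] infsetsum_infsum[OF abs] int by simp
  then have "infsum f A = s"
    using infsum_nonneg[of A f] nonneg \<open>0 \<le> s\<close> by simp
  ultimately show "(f has_sum s) A"
    using has_sum_infsum by blast
qed

lemma has_sum_diff:
  fixes f g :: "'b \<Rightarrow> real"
  assumes "(f has_sum a) A" "(g has_sum b) A"
  shows "((\<lambda>x. f x - g x) has_sum (a - b)) A"
proof -
  have "((\<lambda>x. - g x) has_sum - b) A" using assms(2) by (simp add: has_sum_uminus)
  from has_sum_add[OF assms(1) this] show ?thesis by simp
qed

lemma summable_on_real_between:
  fixes f g h :: "'b \<Rightarrow> real"
  assumes "g summable_on A" "h summable_on A"
    and "\<And>x. x \<in> A \<Longrightarrow> g x \<le> f x" "\<And>x. x \<in> A \<Longrightarrow> f x \<le> h x"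
  shows "f summable_on A"
proof -
  have "(\<lambda>x. h x - g x) summable_on A"
    using has_sum_diff[OF has_sum_infsum has_sum_infsum] assms(1,2) has_sum_imp_summable by blast
  then have "(\<lambda>x. f x - g x) summable_on A"
    by (rule summable_on_comparison_test) (use assms(3,4) in auto)
  from summable_on_add[OF this assms(1)] show ?thesis by simp
qed

lemma diff_le_mult_ln_div:
  fixes p q :: real
  assumes "0 \<le> p" "0 \<le> q" and "0 < p \<Longrightarrow> 0 < q"
  shows "p - q \<le> p * ln (p / q)"
proof (cases "p = 0")
  case False
  then have p: "0 < p" and q: "0 < q" using assms by auto
  have "ln (q / p) \<le> q / p - 1" using p q by (intro ln_le_minus_one) simp
  then have "1 - q / p \<le> ln (p / q)" using p q by (simp add: ln_div)
  then have "p * (1 - q / p) \<le> p * ln (p / q)" using p by (simp add: mult_left_mono)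
  moreover have "p * (1 - q / p) = p - q" using p by (simp add: algebra_simps)
  ultimately show ?thesis by simp
qed (use assms in simp)

text \<open>The scalar inequality behind the supermartingale step: a drop of \<open>d\<close> in the
  log-likelihood ratio pays for the growth factor \<open>exp (\<theta> * d)\<close>.\<close>
lemma exp_mult_diff_le:
  fixes d u \<theta> :: real
  assumes "0 \<le> d" "d \<le> u" "u \<le> 1 / \<theta>" "0 < \<theta>"
  shows "exp (\<theta> * d) * (u - d) \<le> u"
proof -
  have "u * \<theta> \<le> 1" using assms by (simp add: field_simps)
  then have "u * \<theta> * d \<le> d" using assms(1) mult_right_mono by fastforce
  then have "u - d \<le> u * (1 - \<theta> * d)" by (simp add: algebra_simps)
  also have "\<dots> \<le> u * exp (- (\<theta> * d))"
    using exp_ge_add_one_self[of "- (\<theta> * d)"] assms by (intro mult_left_mono) auto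
  finally have "exp (\<theta> * d) * (u - d) \<le> exp (\<theta> * d) * (u * exp (- (\<theta> * d)))" by simp
  also have "\<dots> = u" by (simp add: exp_minus field_simps)
  finally show ?thesis .
qed

lemma cyl_Nil: "cyl [] = UNIV"
  by (simp add: cyl_def)

lemma cyl_snoc: "cyl (x @ [a]) = cyl x \<inter> {\<omega>. \<omega> !! length x = a}"
proof -
  have "stake (Suc (length x)) \<omega> = x @ [a] \<longleftrightarrow> stake (length x) \<omega> = x \<and> \<omega> !! length x = a" for \<omega>
    by (simp only: stake_Suc) auto
  then show ?thesis by (auto simp: cyl_def simp del: stake.simps)
qed

lemma cyl_in_sets:
  assumes "sets \<nu> = sets (seq_space :: 'a::countable stream measure)"
  shows "cyl (x :: 'a list) \<in> sets \<nu>"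
proof -
  have "cyl x = stake (length x) -` {x} \<inter> space seq_space"
    by (auto simp: cyl_def space_stream_space)
  then show ?thesis
    using assms measurable_sets[OF measurable_stake] by simp
qed

lemma countable_lists_length: "countable {x :: 'a::countable list. length x = n}"
  by (rule countable_subset[of _ UNIV]) auto

lemma nn_integral_lists_length_Suc:
  "(\<integral>\<^sup>+y. F y \<partial>count_space {y :: 'a::countable list. length y = Suc n}) =
   (\<integral>\<^sup>+x. (\<integral>\<^sup>+a. F (x @ [a]) \<partial>count_space UNIV) \<partial>count_space {x. length x = n})"
proof -
  let ?A = "{x :: 'a list. length x = n}"
  have "bij_betw (\<lambda>p. fst p @ [snd p]) (?A \<times> UNIV) {y. length y = Suc n}"
    by (rule bij_betw_byWitness[where f' = "\<lambda>y. (butlast y, last y)"])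
      (auto simp: snoc_eq_iff_butlast)
  then have "(\<integral>\<^sup>+y. F y \<partial>count_space {y. length y = Suc n}) =
      (\<integral>\<^sup>+p. F (fst p @ [snd p]) \<partial>count_space (?A \<times> UNIV))"
    by (rule nn_integral_bij_count_space[symmetric])
  also have "count_space (?A \<times> UNIV) = count_space ?A \<Otimes>\<^sub>M count_space (UNIV :: 'a set)"
    by (rule pair_measure_countable[symmetric]) (auto intro: countable_lists_length)
  also have "(\<integral>\<^sup>+p. F (fst p @ [snd p]) \<partial>(count_space ?A \<Otimes>\<^sub>M count_space UNIV)) =
      (\<integral>\<^sup>+x. (\<integral>\<^sup>+a. F (x @ [a]) \<partial>count_space UNIV) \<partial>count_space ?A)"
  proof -
    interpret sigma_finite_measure "count_space (UNIV :: 'a set)"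
      by (rule sigma_finite_measure_count_space_countable) simp
    have "(\<lambda>p. F (fst p @ [snd p])) \<in> borel_measurable (count_space ?A \<Otimes>\<^sub>M count_space UNIV)"
      by (subst pair_measure_countable) (auto intro: countable_lists_length)
    from nn_integral_fst[OF this] show ?thesis by simp
  qed
  finally show ?thesis .
qed

lemma mcyl_nonneg: "0 \<le> mcyl \<nu> x"
  by (simp add: mcyl_def)

locale stream_prob_space = prob_space M for M :: "'a::countable stream measure" +
  assumes sets_eq_stream_space: "sets M = sets seq_space"
begin

lemma space_eq_UNIV: "space M = UNIV"
  using sets_eq_imp_space_eq[OF sets_eq_stream_space] by (simp add: space_stream_space)

lemma emeasure_cyl: "emeasure M (cyl x) = ennreal (mcyl M x)"
  by (simp add: mcyl_def emeasure_eq_measure)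

lemma mcyl_le_1: "mcyl M x \<le> 1"
  by (simp add: mcyl_def)

lemma mcyl_Nil: "mcyl M [] = 1"
  by (simp add: mcyl_def cyl_Nil prob_space flip: space_eq_UNIV)

lemma mcyl_snoc_le: "mcyl M (x @ [a]) \<le> mcyl M x"
proof -
  have "cyl (x @ [a]) \<subseteq> cyl x" by (auto simp: cyl_snoc)
  then show ?thesis
    unfolding mcyl_def by (rule finite_measure_mono) (rule cyl_in_sets[OF sets_eq_stream_space])
qed

lemma mcyl_snoc_has_sum: "((\<lambda>a. mcyl M (x @ [a])) has_sum mcyl M x) UNIV"
proof -
  have "disjoint_family (\<lambda>a. cyl (x @ [a]))"
    by (auto simp: disjoint_family_on_def cyl_snoc)
  then have "emeasure M (\<Union>a. cyl (x @ [a])) = (\<integral>\<^sup>+a. emeasure M (cyl (x @ [a])) \<partial>count_space UNIV)"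
    by (intro emeasure_UN_countable cyl_in_sets[OF sets_eq_stream_space]) auto
  moreover have "(\<Union>a. cyl (x @ [a])) = cyl x"
    by (auto simp: cyl_snoc)
  ultimately show ?thesis
    by (simp add: has_sum_iff_nn_integral_count_space mcyl_nonneg emeasure_cyl)
qed

lemma stake_Collect_in_sets: "{\<omega> \<in> space M. P (stake n \<omega>)} \<in> sets M"
proof -
  have "stake n \<in> M \<rightarrow>\<^sub>M count_space UNIV"
    using measurable_stake by (subst measurable_cong_sets[OF sets_eq_stream_space refl])
  from measurable_sets[OF this, of "Collect P"] show ?thesis
    by (simp add: vimage_def Int_def conj_commute)
qed

lemma nn_integral_stake:
  "(\<integral>\<^sup>+\<omega>. f (stake n \<omega>) \<partial>M) =
   (\<integral>\<^sup>+x. f x * ennreal (mcyl M x) \<partial>count_space {x. length x = n})"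
proof -
  have "f (stake n \<omega>) = (\<integral>\<^sup>+x. f x * indicator (cyl x) \<omega> \<partial>count_space {x. length x = n})" for \<omega>
  proof -
    have "(\<integral>\<^sup>+x. f x * indicator (cyl x) \<omega> \<partial>count_space {x. length x = n})
       = (\<integral>\<^sup>+x. f x * indicator {stake n \<omega>} x \<partial>count_space {x. length x = n})"
      by (rule nn_integral_cong) (auto simp: cyl_def split: split_indicator)
    then show ?thesis
      by (simp add: nn_integral_indicator_singleton)
  qed
  then have "(\<integral>\<^sup>+\<omega>. f (stake n \<omega>) \<partial>M) =
      (\<integral>\<^sup>+\<omega>. (\<integral>\<^sup>+x. f x * indicator (cyl x) \<omega> \<partial>count_space {x. length x = n}) \<partial>M)"
    by simp
  also have "\<dots> = (\<integral>\<^sup>+x. (\<integral>\<^sup>+\<omega>. f x * indicator (cyl x) \<omega> \<partial>M) \<partial>count_space {x. length x = n})"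
    by (intro nn_integral_count_space_nn_integral[OF countable_lists_length] borel_measurable_times_ennreal
        borel_measurable_const borel_measurable_indicator cyl_in_sets[OF sets_eq_stream_space])
  also have "\<dots> = (\<integral>\<^sup>+x. f x * ennreal (mcyl M x) \<partial>count_space {x. length x = n})"
    by (rule nn_integral_cong)
      (simp add: nn_integral_cmult_indicator cyl_in_sets[OF sets_eq_stream_space] emeasure_cyl)
  finally show ?thesis .
qed

end

definition cond_prob :: "('a list \<Rightarrow> real) \<Rightarrow> 'a list \<Rightarrow> 'a \<Rightarrow> real" where
  "cond_prob \<rho> x a = \<rho> (x @ [a]) / \<rho> x"

lemma dKL_eq_infsum_cond_prob:
  "dKL \<rho> \<sigma> x = (\<Sum>\<^sub>\<infinity>a. cond_prob \<rho> x a * ln (cond_prob \<rho> x a / cond_prob \<sigma> x a))"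
  by (simp add: dKL_def cond_prob_def)

lemma cond_prob_has_sum:
  assumes "((\<lambda>a. \<rho> (x @ [a])) has_sum \<rho> x) UNIV" "\<rho> x \<noteq> 0"
  shows "(cond_prob \<rho> x has_sum 1) UNIV"
  using has_sum_cmult_right[OF assms(1), of "1 / \<rho> x"] assms(2)
  by (simp add: cond_prob_def[abs_def])

locale bayes_mixture =
  fixes M :: "'a::countable stream measure set"
    and w :: "'a stream measure \<Rightarrow> real"
    and \<mu> :: "'a stream measure"
  assumes countable_M: "countable M"
    and stream_prob_space_M: "\<nu> \<in> M \<Longrightarrow> stream_prob_space \<nu>"
    and weight_pos: "\<nu> \<in> M \<Longrightarrow> 0 < w \<nu>"
    and weight_has_sum: "(w has_sum 1) M"
    and mu_in_M: "\<mu> \<in> M"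
begin

sublocale mu: stream_prob_space \<mu>
  by (rule stream_prob_space_M[OF mu_in_M])

abbreviation m :: "'a list \<Rightarrow> real" where "m \<equiv> mcyl \<mu>"
abbreviation xi :: "'a list \<Rightarrow> real" where "xi \<equiv> mix M w"

lemma weighted_mcyl_nonneg: "\<nu> \<in> M \<Longrightarrow> 0 \<le> w \<nu> * mcyl \<nu> x"
  using weight_pos[of \<nu>] mcyl_nonneg[of \<nu> x] by simp

lemma mix_has_sum: "((\<lambda>\<nu>. w \<nu> * mcyl \<nu> x) has_sum xi x) M"
proof -
  have "(\<lambda>\<nu>. w \<nu> * mcyl \<nu> x) summable_on M"
  proof (rule summable_on_comparison_test)
    show "w summable_on M"
      using weight_has_sum by (rule has_sum_imp_summable)
    show "w \<nu> * mcyl \<nu> x \<le> w \<nu>" if "\<nu> \<in> M" for \<nu>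
      using that weight_pos stream_prob_space.mcyl_le_1[OF stream_prob_space_M]
      by (simp add: mult_left_le less_imp_le)
  qed (rule weighted_mcyl_nonneg)
  then show ?thesis
    unfolding mix_def by (rule has_sum_infsum)
qed

lemma mix_nonneg: "0 \<le> xi x"
  using has_sum_nonneg[OF mix_has_sum weighted_mcyl_nonneg] .

lemma weight_mult_le_mix: "w \<mu> * m x \<le> xi x"
proof -
  have "((\<lambda>\<nu>. w \<nu> * mcyl \<nu> x) has_sum w \<mu> * m x) {\<mu>}"
    by (rule has_sum_finiteI) simp_all
  then show ?thesis
    by (rule has_sum_mono_neutral[OF _ mix_has_sum]) (use mu_in_M weighted_mcyl_nonneg in auto)
qed

lemma mix_pos: "0 < m x \<Longrightarrow> 0 < xi x"
  using weight_mult_le_mix[of x] weight_pos[OF mu_in_M] by (smt (verit) mult_pos_pos)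

lemma mix_Nil: "xi [] = 1"
proof -
  have "xi [] = infsum w M"
    unfolding mix_def by (rule infsum_cong) (simp add: stream_prob_space.mcyl_Nil[OF stream_prob_space_M])
  then show ?thesis
    using weight_has_sum by (simp add: infsumI)
qed

lemma mix_snoc_has_sum: "((\<lambda>a. xi (x @ [a])) has_sum xi x) UNIV"
proof -
  have integral_mix: "(\<integral>\<^sup>+\<nu>. ennreal (w \<nu> * mcyl \<nu> y) \<partial>count_space M) = ennreal (xi y)" for y
    by (rule has_sum_iff_nn_integral_count_space[THEN iffD1, OF weighted_mcyl_nonneg mix_nonneg mix_has_sum])
  have integral_snoc: "(\<integral>\<^sup>+a. ennreal (w \<nu> * mcyl \<nu> (x @ [a])) \<partial>count_space UNIV) = ennreal (w \<nu> * mcyl \<nu> x)"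
    if "\<nu> \<in> M" for \<nu>
  proof (rule has_sum_iff_nn_integral_count_space[THEN iffD1])
    show "((\<lambda>a. w \<nu> * mcyl \<nu> (x @ [a])) has_sum w \<nu> * mcyl \<nu> x) UNIV"
      by (rule has_sum_cmult_right) (rule stream_prob_space.mcyl_snoc_has_sum[OF stream_prob_space_M[OF that]])
  qed (use weighted_mcyl_nonneg[OF that] in auto)
  have "(\<integral>\<^sup>+a. ennreal (xi (x @ [a])) \<partial>count_space UNIV)
      = (\<integral>\<^sup>+a. (\<integral>\<^sup>+\<nu>. ennreal (w \<nu> * mcyl \<nu> (x @ [a])) \<partial>count_space M) \<partial>count_space UNIV)"
    by (simp only: integral_mix)
  also have "\<dots> = (\<integral>\<^sup>+\<nu>. (\<integral>\<^sup>+a. ennreal (w \<nu> * mcyl \<nu> (x @ [a])) \<partial>count_space UNIV) \<partial>count_space M)"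
    by (rule nn_integral_count_space_nn_integral[OF countable_M]) simp
  also have "\<dots> = (\<integral>\<^sup>+\<nu>. ennreal (w \<nu> * mcyl \<nu> x) \<partial>count_space M)"
    by (rule nn_integral_cong) (simp add: integral_snoc)
  also have "\<dots> = ennreal (xi x)"
    by (rule integral_mix)
  finally show ?thesis
    by (rule has_sum_iff_nn_integral_count_space[THEN iffD2, rotated 2]) (simp_all add: mix_nonneg)
qed

text \<open>If \<open>m y = 0\<close> the quotient is \<open>0\<close> and so is \<open>log_ratio y\<close>.\<close>
definition log_ratio :: "'a list \<Rightarrow> real" where
  "log_ratio y = ln (xi y / (w \<mu> * m y))"

lemma log_ratio_nonneg: "0 \<le> log_ratio y"
proof (cases "0 < m y")
  case True
  then have "1 \<le> xi y / (w \<mu> * m y)"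
    using weight_mult_le_mix[of y] weight_pos[OF mu_in_M] by simp
  then show ?thesis
    by (simp add: log_ratio_def)
qed (use mcyl_nonneg[of \<mu> y] in \<open>simp add: log_ratio_def\<close>)

lemma log_ratio_Nil: "log_ratio [] = ln (1 / w \<mu>)"
  by (simp add: log_ratio_def mix_Nil mu.mcyl_Nil)

lemma log_ratio_le:
  assumes "0 < m y" "xi y \<le> T * m y"
  shows "log_ratio y \<le> ln (T / w \<mu>)"
proof -
  have "0 < xi y / (w \<mu> * m y)"
    using assms(1) mix_pos weight_pos[OF mu_in_M] by simp
  moreover have "xi y / (w \<mu> * m y) \<le> T / w \<mu>"
    using assms weight_pos[OF mu_in_M] by (simp add: field_simps)
  ultimately show ?thesis
    unfolding log_ratio_def by simp
qed

lemma log_ratio_snoc: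
  assumes pos: "0 < m (x @ [a])"
  shows "log_ratio (x @ [a]) = log_ratio x - ln (cond_prob m x a / cond_prob xi x a)"
proof -
  have mx: "0 < m x"
    using pos mu.mcyl_snoc_le[of x a] by simp
  let ?r = "\<lambda>y. xi y / (w \<mu> * m y)"
  have factor: "?r x = (cond_prob m x a / cond_prob xi x a) * ?r (x @ [a])"
    using pos mx mix_pos[OF pos] mix_pos[OF mx] weight_pos[OF mu_in_M]
    by (simp add: cond_prob_def field_simps)
  have "0 < cond_prob m x a / cond_prob xi x a" "0 < ?r (x @ [a])"
    using pos mx mix_pos[OF pos] mix_pos[OF mx] weight_pos[OF mu_in_M] by (simp_all add: cond_prob_def)
  then have "ln (?r x) = ln (cond_prob m x a / cond_prob xi x a) + ln (?r (x @ [a]))"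
    by (subst factor) (rule ln_mult_pos)
  then show ?thesis
    unfolding log_ratio_def by simp
qed

lemma dKL_summand_ge:
  assumes mx: "0 < m x"
  shows "cond_prob m x a - cond_prob xi x a \<le> cond_prob m x a * ln (cond_prob m x a / cond_prob xi x a)"
proof (rule diff_le_mult_ln_div)
  show "0 \<le> cond_prob m x a" "0 \<le> cond_prob xi x a"
    unfolding cond_prob_def
    using mx mix_pos[OF mx] mcyl_nonneg[of \<mu> "x @ [a]"] mix_nonneg[of "x @ [a]"] by simp_all
  show "0 < cond_prob xi x a" if "0 < cond_prob m x a"
  proof -
    have "0 < m (x @ [a])"
      using that mx by (simp add: cond_prob_def zero_less_divide_iff)
    then show ?thesis
      using mix_pos mix_pos[OF mx] by (simp add: cond_prob_def)
  qed
qed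

lemma dKL_has_sum:
  assumes mx: "0 < m x"
  defines "p \<equiv> cond_prob m x" and "q \<equiv> cond_prob xi x"
  shows "((\<lambda>a. p a * ln (p a / q a)) has_sum dKL m xi x) UNIV"
proof -
  have p: "(p has_sum 1) UNIV"
    unfolding p_def using mu.mcyl_snoc_has_sum mx by (intro cond_prob_has_sum) auto
  have q: "(q has_sum 1) UNIV"
    unfolding q_def using mix_snoc_has_sum mix_pos[OF mx] by (intro cond_prob_has_sum) auto
  have lower: "p a - q a \<le> p a * ln (p a / q a)" for a
    unfolding p_def q_def by (rule dKL_summand_ge[OF mx])
  have upper: "p a * ln (p a / q a) \<le> p a * log_ratio x" for a
  proof (cases "0 < m (x @ [a])")
    case True
    then show ?thesis
      using log_ratio_snoc[OF True] log_ratio_nonneg[of "x @ [a]"] mx mcyl_nonneg[of \<mu> "x @ [a]"]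
      by (intro mult_left_mono) (auto simp: p_def q_def cond_prob_def)
  qed (use mcyl_nonneg[of \<mu> "x @ [a]"] in \<open>simp add: p_def cond_prob_def\<close>)
  have "(\<lambda>a. p a * ln (p a / q a)) summable_on UNIV"
    by (rule summable_on_real_between[OF _ _ lower upper])
      (use has_sum_diff[OF p q] has_sum_cmult_left[OF p] in \<open>auto intro: has_sum_imp_summable\<close>)
  then show ?thesis
    unfolding dKL_eq_infsum_cond_prob p_def q_def by (rule has_sum_infsum)
qed

lemma dKL_nonneg: "0 \<le> dKL m xi x"
proof (cases "0 < m x")
  case True
  let ?p = "cond_prob m x" and ?q = "cond_prob xi x"
  have "((\<lambda>a. ?p a - ?q a) has_sum 1 - 1) UNIV"
    using mu.mcyl_snoc_has_sum mix_snoc_has_sum mix_pos[OF True] True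
    by (intro has_sum_diff cond_prob_has_sum) auto
  then have "1 - 1 \<le> dKL m xi x"
    by (rule has_sum_mono[OF _ dKL_has_sum[OF True] dKL_summand_ge[OF True]])
  then show ?thesis by simp
qed (use mcyl_nonneg[of \<mu> x] in \<open>simp add: dKL_def\<close>)

lemma log_ratio_snoc_has_sum:
  assumes mx: "0 < m x"
  shows "((\<lambda>a. m (x @ [a]) * log_ratio (x @ [a])) has_sum m x * (log_ratio x - dKL m xi x)) UNIV"
proof -
  let ?p = "cond_prob m x" and ?q = "cond_prob xi x"
  have "m (x @ [a]) * log_ratio (x @ [a]) = m x * (?p a * log_ratio x - ?p a * ln (?p a / ?q a))" for a
  proof (cases "0 < m (x @ [a])")
    case True
    then show ?thesis
      using mx by (simp add: log_ratio_snoc cond_prob_def algebra_simps)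
  qed (use mcyl_nonneg[of \<mu> "x @ [a]"] in \<open>simp add: cond_prob_def\<close>)
  moreover have "(?p has_sum 1) UNIV"
    using mu.mcyl_snoc_has_sum mx by (intro cond_prob_has_sum) auto
  ultimately show ?thesis
    using has_sum_cmult_right[OF has_sum_diff[OF has_sum_cmult_left[OF \<open>(?p has_sum 1) UNIV\<close>, of "log_ratio x"]
          dKL_has_sum[OF mx]], of "m x"]
    by (simp add: mult.commute)
qed

lemma dKL_le_log_ratio:
  assumes "0 < m x"
  shows "dKL m xi x \<le> log_ratio x"
proof -
  have "0 \<le> m x * (log_ratio x - dKL m xi x)"
    by (rule has_sum_nonneg[OF log_ratio_snoc_has_sum[OF assms]])
      (intro mult_nonneg_nonneg mcyl_nonneg log_ratio_nonneg)
  then show ?thesis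
    using assms by (simp add: zero_le_mult_iff)
qed

definition cum_dKL :: "'a list \<Rightarrow> real" where
  "cum_dKL y = (\<Sum>t<length y. dKL m xi (take t y))"

lemma cum_dKL_Nil: "cum_dKL [] = 0"
  by (simp add: cum_dKL_def)

lemma cum_dKL_snoc: "cum_dKL (x @ [a]) = cum_dKL x + dKL m xi x"
proof -
  have "(\<Sum>t<length x. dKL m xi (take t (x @ [a]))) = cum_dKL x"
    unfolding cum_dKL_def by (rule sum.cong) auto
  then show ?thesis
    by (simp add: cum_dKL_def)
qed

lemma Dinf_eq_SUP_cum_dKL: "Dinf m xi \<omega> = (SUP n. ennreal (cum_dKL (stake n \<omega>)))"
proof -
  have "cum_dKL (stake n \<omega>) = (\<Sum>t<n. dKL m xi (stake t \<omega>))" for n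
    unfolding cum_dKL_def by (rule sum.cong) (auto simp: take_stake min_def)
  then show ?thesis
    unfolding Dinf_def suminf_eq_SUP by (simp add: dKL_nonneg)
qed

end

locale bayes_potential = bayes_mixture +
  fixes T \<theta> c B :: real
  assumes T_pos: "0 < T" and theta_pos: "0 < \<theta>" and c_pos: "0 < c" and B_nonneg: "0 \<le> B"
    and log_ratio_bound: "ln (T / w \<mu>) + c \<le> 1 / \<theta>"
begin

definition dominated :: "'a list \<Rightarrow> bool" where
  "dominated y \<longleftrightarrow> (\<forall>t<length y. xi (take t y) \<le> T * m (take t y))"

text \<open>A prefix leaves the dominated region right after one whose second summand is \<open>\<ge> 1\<close>;
  from there on the potential is frozen at \<open>1\<close>.\<close>
definition potential :: "'a list \<Rightarrow> ennreal" where
  "potential y = (if dominated y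
     then ennreal (exp (\<theta> * (cum_dKL y - B)) * (log_ratio y + c) / c + xi y / (T * m y))
     else 1)"

lemma dominated_snoc: "dominated (x @ [a]) \<longleftrightarrow> dominated x \<and> xi x \<le> T * m x"
  by (auto simp: dominated_def less_Suc_eq nth_append)

lemma potential_Nil:
  "potential [] = ennreal (exp (- (\<theta> * B)) * (ln (1 / w \<mu>) + c) / c + 1 / T)"
  by (simp add: potential_def dominated_def cum_dKL_Nil log_ratio_Nil mix_Nil mu.mcyl_Nil)

lemma one_le_potential_of_gt:
  assumes "B < cum_dKL y"
  shows "1 \<le> potential y"
proof (cases "dominated y")
  case True
  have "1 \<le> exp (\<theta> * (cum_dKL y - B))"
    using assms theta_pos by simp
  moreover have "c \<le> log_ratio y + c"
    using log_ratio_nonneg[of y] by simp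
  ultimately have "1 * c \<le> exp (\<theta> * (cum_dKL y - B)) * (log_ratio y + c)"
    using c_pos by (intro mult_mono) auto
  then have "1 \<le> exp (\<theta> * (cum_dKL y - B)) * (log_ratio y + c) / c"
    using c_pos by (simp add: le_divide_eq)
  moreover have "0 \<le> xi y / (T * m y)"
    using mix_nonneg[of y] T_pos mcyl_nonneg[of \<mu> y] by simp
  ultimately have "1 \<le> exp (\<theta> * (cum_dKL y - B)) * (log_ratio y + c) / c + xi y / (T * m y)"
    by simp
  then show ?thesis
    using True ennreal_leI by (fastforce simp: potential_def)
qed (simp add: potential_def)

lemma nn_integral_potential_snoc_exit:
  assumes mx: "0 < m x" and exit: "\<not> (dominated x \<and> xi x \<le> T * m x)"
  shows "(\<integral>\<^sup>+a. ennreal (m (x @ [a])) * potential (x @ [a]) \<partial>count_space UNIV) \<le> ennreal (m x) * potential x"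
proof -
  have "1 \<le> potential x"
  proof (cases "dominated x")
    case True
    then have "1 \<le> xi x / (T * m x)"
      using exit mx T_pos by simp
    moreover have "0 \<le> exp (\<theta> * (cum_dKL x - B)) * (log_ratio x + c) / c"
      using log_ratio_nonneg[of x] c_pos by simp
    ultimately have "1 \<le> exp (\<theta> * (cum_dKL x - B)) * (log_ratio x + c) / c + xi x / (T * m x)"
      by simp
    then show ?thesis
      using True ennreal_leI by (fastforce simp: potential_def)
  qed (simp add: potential_def)
  then have "ennreal (m x) \<le> ennreal (m x) * potential x"
    using mult_left_mono[of 1 "potential x" "ennreal (m x)"] by simp
  moreover have "(\<integral>\<^sup>+a. ennreal (m (x @ [a])) \<partial>count_space UNIV) = ennreal (m x)"
    by (rule has_sum_iff_nn_integral_count_space[THEN iffD1, OF mcyl_nonneg mcyl_nonneg mu.mcyl_snoc_has_sum])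
  moreover have "\<not> dominated (x @ [a])" for a
    using exit by (simp add: dominated_snoc)
  then have "potential (x @ [a]) = 1" for a
    by (simp add: potential_def)
  ultimately show ?thesis
    by simp
qed

lemma mcyl_mult_potential_snoc_le:
  assumes "dominated x" "xi x \<le> T * m x"
  shows "ennreal (m (x @ [a])) * potential (x @ [a]) \<le> ennreal
    (exp (\<theta> * (cum_dKL x + dKL m xi x - B)) / c * (m (x @ [a]) * (log_ratio (x @ [a]) + c)) + xi (x @ [a]) / T)"
proof -
  have "m (x @ [a]) * (exp (\<theta> * (cum_dKL (x @ [a]) - B)) * (log_ratio (x @ [a]) + c) / c)
      = exp (\<theta> * (cum_dKL x + dKL m xi x - B)) / c * (m (x @ [a]) * (log_ratio (x @ [a]) + c))"
    by (simp add: cum_dKL_snoc)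
  moreover have "m (x @ [a]) * (xi (x @ [a]) / (T * m (x @ [a]))) \<le> xi (x @ [a]) / T"
    using mix_nonneg[of "x @ [a]"] T_pos by (cases "m (x @ [a]) = 0") simp_all
  ultimately have "m (x @ [a]) * (exp (\<theta> * (cum_dKL (x @ [a]) - B)) * (log_ratio (x @ [a]) + c) / c
      + xi (x @ [a]) / (T * m (x @ [a])))
    \<le> exp (\<theta> * (cum_dKL x + dKL m xi x - B)) / c * (m (x @ [a]) * (log_ratio (x @ [a]) + c)) + xi (x @ [a]) / T"
    by (simp only: distrib_left)
  then show ?thesis
    using assms ennreal_leI
    by (fastforce simp: potential_def dominated_snoc ennreal_mult'[OF mcyl_nonneg, symmetric])
qed

lemma nn_integral_potential_snoc_active:
  assumes mx: "0 < m x" and dom: "dominated x" and le: "xi x \<le> T * m x"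
  shows "(\<integral>\<^sup>+a. ennreal (m (x @ [a])) * potential (x @ [a]) \<partial>count_space UNIV) \<le> ennreal (m x) * potential x"
proof -
  define d where "d = dKL m xi x"
  define u where "u = log_ratio x + c"
  define e where "e = exp (\<theta> * (cum_dKL x - B)) / c"
  define g where "g a = e * exp (\<theta> * d) * (m (x @ [a]) * (log_ratio (x @ [a]) + c)) + xi (x @ [a]) / T" for a
  have e_pos: "0 < e"
    unfolding e_def using c_pos by simp
  have "((\<lambda>a. m (x @ [a]) * log_ratio (x @ [a]) + m (x @ [a]) * c) has_sum m x * (u - d)) UNIV"
    using has_sum_add[OF log_ratio_snoc_has_sum[OF mx] has_sum_cmult_left[OF mu.mcyl_snoc_has_sum[of x], of c]]
    by (simp add: u_def d_def algebra_simps)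
  then have g_has_sum: "(g has_sum e * exp (\<theta> * d) * (m x * (u - d)) + xi x / T) UNIV"
    unfolding g_def[abs_def] using has_sum_divide_const[OF mix_snoc_has_sum]
    by (intro has_sum_add has_sum_cmult_right) (simp_all add: distrib_left)
  have g_nonneg: "0 \<le> g a" for a
    unfolding g_def using e_pos T_pos c_pos mcyl_nonneg[of \<mu> "x @ [a]"] mix_nonneg[of "x @ [a]"]
      log_ratio_nonneg[of "x @ [a]"] by simp
  have "e * exp (\<theta> * d) = exp (\<theta> * (cum_dKL x + dKL m xi x - B)) / c"
    unfolding e_def d_def by (simp add: algebra_simps flip: exp_add)
  then have "(\<integral>\<^sup>+a. ennreal (m (x @ [a])) * potential (x @ [a]) \<partial>count_space UNIV)
      \<le> (\<integral>\<^sup>+a. ennreal (g a) \<partial>count_space UNIV)"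
    using mcyl_mult_potential_snoc_le[OF dom le] by (intro nn_integral_mono) (simp add: g_def)
  also have "\<dots> = ennreal (e * exp (\<theta> * d) * (m x * (u - d)) + xi x / T)"
    by (rule has_sum_iff_nn_integral_count_space[THEN iffD1, OF g_nonneg has_sum_nonneg[OF g_has_sum g_nonneg] g_has_sum])
  also have "\<dots> \<le> ennreal (m x * (e * u + xi x / (T * m x)))"
  proof (rule ennreal_leI)
    have "exp (\<theta> * d) * (u - d) \<le> u"
    proof (rule exp_mult_diff_le[OF _ _ _ theta_pos])
      show "0 \<le> d" "d \<le> u"
        using dKL_nonneg dKL_le_log_ratio[OF mx] c_pos by (simp_all add: d_def u_def)
      show "u \<le> 1 / \<theta>"
        using log_ratio_le[OF mx le] log_ratio_bound by (simp add: u_def)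
    qed
    then have "e * exp (\<theta> * d) * (m x * (u - d)) \<le> m x * (e * u)"
      using mult_left_mono[of _ _ "m x * e"] mx e_pos by (simp add: mult_ac)
    then show "e * exp (\<theta> * d) * (m x * (u - d)) + xi x / T \<le> m x * (e * u + xi x / (T * m x))"
      using mx by (simp add: distrib_left)
  qed
  also have "\<dots> = ennreal (m x) * potential x"
    using dom by (simp add: potential_def e_def u_def ennreal_mult'[OF mcyl_nonneg, symmetric] mult_ac)
  finally show ?thesis .
qed

lemma nn_integral_potential_snoc_le:
  "(\<integral>\<^sup>+a. ennreal (m (x @ [a])) * potential (x @ [a]) \<partial>count_space UNIV) \<le> ennreal (m x) * potential x"
proof (cases "0 < m x")
  case False
  then have "m (x @ [a]) = 0" for a
    using mu.mcyl_snoc_le[of x a] mcyl_nonneg[of \<mu> "x @ [a]"] by simp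
  then show ?thesis by simp
next
  case True
  then show ?thesis
    using nn_integral_potential_snoc_active nn_integral_potential_snoc_exit by blast
qed

lemma nn_integral_potential_stake_le: "(\<integral>\<^sup>+\<omega>. potential (stake n \<omega>) \<partial>\<mu>) \<le> potential []"
proof (induction n)
  case 0
  then show ?case
    by (simp add: mu.emeasure_space_1)
next
  case (Suc n)
  have "(\<integral>\<^sup>+\<omega>. potential (stake (Suc n) \<omega>) \<partial>\<mu>) =
      (\<integral>\<^sup>+x. (\<integral>\<^sup>+a. ennreal (m (x @ [a])) * potential (x @ [a]) \<partial>count_space UNIV) \<partial>count_space {x. length x = n})"
    unfolding mu.nn_integral_stake nn_integral_lists_length_Suc by (simp only: mult.commute)
  also have "\<dots> \<le> (\<integral>\<^sup>+x. ennreal (m x) * potential x \<partial>count_space {x. length x = n})"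
    by (intro nn_integral_mono nn_integral_potential_snoc_le)
  also have "\<dots> = (\<integral>\<^sup>+\<omega>. potential (stake n \<omega>) \<partial>\<mu>)"
    unfolding mu.nn_integral_stake by (simp only: mult.commute)
  finally show ?case
    using Suc.IH by simp
qed

lemma cum_dKL_gt_in_sets: "{\<omega> \<in> space \<mu>. B < cum_dKL (stake n \<omega>)} \<in> sets \<mu>"
  using mu.stake_Collect_in_sets[where P = "\<lambda>y. B < cum_dKL y"] .

lemma emeasure_cum_dKL_gt_le: "emeasure \<mu> {\<omega> \<in> space \<mu>. B < cum_dKL (stake n \<omega>)} \<le> potential []"
proof -
  let ?E = "{\<omega> \<in> space \<mu>. B < cum_dKL (stake n \<omega>)}"
  have "emeasure \<mu> ?E = (\<integral>\<^sup>+\<omega>. indicator ?E \<omega> \<partial>\<mu>)"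
    by (rule nn_integral_indicator[symmetric]) (rule cum_dKL_gt_in_sets)
  also have "\<dots> \<le> (\<integral>\<^sup>+\<omega>. potential (stake n \<omega>) \<partial>\<mu>)"
    by (intro nn_integral_mono) (auto split: split_indicator intro: one_le_potential_of_gt)
  also have "\<dots> \<le> potential []"
    by (rule nn_integral_potential_stake_le)
  finally show ?thesis .
qed

lemma Dinf_gt_eq_UN:
  "{\<omega> \<in> space \<mu>. ennreal B < Dinf m xi \<omega>} = (\<Union>n. {\<omega> \<in> space \<mu>. B < cum_dKL (stake n \<omega>)})"
  by (auto simp: Dinf_eq_SUP_cum_dKL less_SUP_iff ennreal_less_iff B_nonneg)

lemma emeasure_Dinf_gt_le: "emeasure \<mu> {\<omega> \<in> space \<mu>. ennreal B < Dinf m xi \<omega>} \<le> potential []"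
proof -
  have "incseq (\<lambda>n. {\<omega> \<in> space \<mu>. B < cum_dKL (stake n \<omega>)})"
  proof (rule incseq_SucI)
    show "{\<omega> \<in> space \<mu>. B < cum_dKL (stake n \<omega>)} \<subseteq> {\<omega> \<in> space \<mu>. B < cum_dKL (stake (Suc n) \<omega>)}" for n
      using dKL_nonneg by (auto simp: stake_Suc cum_dKL_snoc simp del: stake.simps intro: less_le_trans)
  qed
  moreover have "range (\<lambda>n. {\<omega> \<in> space \<mu>. B < cum_dKL (stake n \<omega>)}) \<subseteq> sets \<mu>"
    using cum_dKL_gt_in_sets by (simp add: image_subset_iff)
  ultimately have "emeasure \<mu> (\<Union>n. {\<omega> \<in> space \<mu>. B < cum_dKL (stake n \<omega>)})
      = (SUP n. emeasure \<mu> {\<omega> \<in> space \<mu>. B < cum_dKL (stake n \<omega>)})"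
    by (intro SUP_emeasure_incseq[symmetric])
  also have "\<dots> \<le> potential []"
    by (rule SUP_least) (rule emeasure_cum_dKL_gt_le)
  finally show ?thesis
    by (simp add: Dinf_gt_eq_UN)
qed

lemma prob_Dinf_le:
  "1 - (exp (- (\<theta> * B)) * (ln (1 / w \<mu>) + c) / c + 1 / T)
     \<le> measure \<mu> {\<omega> \<in> space \<mu>. Dinf m xi \<omega> \<le> ennreal B}"
proof -
  let ?bad = "{\<omega> \<in> space \<mu>. ennreal B < Dinf m xi \<omega>}"
  have bad_in_sets: "?bad \<in> sets \<mu>"
    unfolding Dinf_gt_eq_UN using cum_dKL_gt_in_sets by (intro sets.countable_UN) (simp add: image_subset_iff)
  have "0 \<le> exp (- (\<theta> * B)) * (ln (1 / w \<mu>) + c) / c + 1 / T"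
    using log_ratio_nonneg[of "[]"] c_pos T_pos by (simp add: log_ratio_Nil)
  then have "measure \<mu> ?bad \<le> exp (- (\<theta> * B)) * (ln (1 / w \<mu>) + c) / c + 1 / T"
    using emeasure_Dinf_gt_le by (simp add: potential_Nil mu.emeasure_eq_measure)
  moreover have "{\<omega> \<in> space \<mu>. Dinf m xi \<omega> \<le> ennreal B} = space \<mu> - ?bad"
    by (auto simp: not_less)
  ultimately show ?thesis
    using mu.prob_compl[OF bad_in_sets] by simp
qed

end

lemma tail_parameters_le:
  fixes \<delta> K L :: real
  assumes "0 < \<delta>" "\<delta> < 1" "0 \<le> K" and L: "L = ln (2 / \<delta>) + K"
  shows "exp (- (1 / (2 * L) * (exp 1 * ln (6 / \<delta>) * L))) * (K + L) / L + 1 / (2 / \<delta>) \<le> \<delta>"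
proof -
  have ln2: "0 < ln (2 / \<delta>)" and ln6: "0 < ln (6 / \<delta>)"
    using assms(1,2) by simp_all
  then have L_pos: "0 < L"
    using assms(3) L by simp
  have "ln (6 / \<delta>) \<le> exp 1 * ln (6 / \<delta>) / 2"
    using exp_ge_add_one_self[of 1] ln6 by simp
  then have "exp (- (1 / (2 * L) * (exp 1 * ln (6 / \<delta>) * L))) \<le> exp (- ln (6 / \<delta>))"
    using L_pos by simp
  also have "\<dots> = \<delta> / 6"
    using assms(1) by (simp add: exp_minus)
  finally have "exp (- (1 / (2 * L) * (exp 1 * ln (6 / \<delta>) * L))) * ((K + L) / L) \<le> \<delta> / 6 * 2"
    using L ln2 L_pos assms(1,3) by (intro mult_mono) (simp_all add: divide_le_eq)
  then show ?thesis
    using assms(1) by simp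
qed

theorem theorem3:
  fixes M :: "('a::countable) stream measure set"
    and w :: "'a stream measure \<Rightarrow> real"
    and \<mu> :: "'a stream measure"
    and \<delta> :: real
  assumes "countable M"
    and "\<forall>\<nu>\<in>M. prob_space \<nu> \<and> sets \<nu> = sets seq_space"
    and "\<forall>\<nu>\<in>M. 0 < w \<nu> \<and> w \<nu> \<le> 1"
    and "(w has_sum 1) M"
    and "\<mu> \<in> M"
    and "0 < \<delta>" and "\<delta> < 1"
  shows "measure \<mu> {\<omega> \<in> space \<mu>. Dinf (mcyl \<mu>) (mix M w) \<omega>
            \<le> ennreal (exp 1 * ln (6 / \<delta>) * (ln (2 / \<delta>) + ln (1 / w \<mu>)))} \<ge> 1 - \<delta>"
proof -
  have "stream_prob_space \<nu>" if "\<nu> \<in> M" for \<nu>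
    using assms(2) that unfolding stream_prob_space_def stream_prob_space_axioms_def by blast
  then interpret bayes_mixture M w \<mu>
    using assms(1,3-5) by (intro bayes_mixture.intro) simp_all
  define L where "L = ln (2 / \<delta>) + ln (1 / w \<mu>)"
  have K_nonneg: "0 \<le> ln (1 / w \<mu>)"
    using log_ratio_nonneg[of "[]"] by (simp add: log_ratio_Nil)
  have "0 < ln (2 / \<delta>)"
    using assms(6,7) by simp
  then have L_pos: "0 < L"
    unfolding L_def using K_nonneg by linarith
  interpret bayes_potential M w \<mu> "2 / \<delta>" "1 / (2 * L)" L "exp 1 * ln (6 / \<delta>) * L"
  proof unfold_locales
    show "ln (2 / \<delta> / w \<mu>) + L \<le> 1 / (1 / (2 * L))"
      using assms(6) weight_pos[OF mu_in_M] by (simp add: L_def ln_div ln_mult)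
  qed (use L_pos assms(6,7) in simp_all)
  show ?thesis
    using prob_Dinf_le tail_parameters_le[OF assms(6,7) K_nonneg L_def] unfolding L_def by linarith
qed

end
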